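(* Fix integers $N\ge 2$ and $K\ge 1$. For every $r\in\mathbb{N}^+$, the class $M^{\text{RESCAL}}_{2r+1}$ subsumes the class $M^{\text{TransE}}_r$, i.e. $\pi(\mathcal{M}^{\text{TransE}}_r)\subseteq \pi(\mathcal{M}^{\text{RESCAL}}_{2r+1})$.
   Context: There are $N$ entities and $K$ relations. A score-based model assigns a score $s_k(i,j)\in\mathbb{R}$ to each triple (subject $i$, relation $k$, object $j$), $i,j\in\{1,\dots,N\}$, $k\in\{1,\dots,K\}$; its scoring tensor $\mathcal{S}\in\mathbb{R}^{N\times N\times K}$ has frontal slices $\mathbf{S}_k$ with $[\mathbf{S}_k]_{ij}=s_k(i,j)$. For a real $N\times N$ matrix $\mathbf{S}$, $\pi(\mathbf{S})$ is the matrix of dense ranks: $\pi_{ij}(\mathbf{S})=1+$ (number of distinct values among the entries of $\mathbf{S}$ that are strictly larger than $s_{ij}$); so larger scores get smaller ranks, and $s_{ij}\le s_{i'j'}\iff \pi_{ij}(\mathbf{S})\ge\pi_{i'j'}(\mathbf{S})$. For a tensor, $\pi$ is applied to each frontal slice; for a set $X$, $\pi(X)=\{\pi(x):x\in X\}$. RESCAL of size $r$: parameters $\mathbf{A}\in\mathbb{R}^{N\times r}$ (rows $\mathbf{a}_i$) and $\mathbf{R}_1,\dots,\mathbf{R}_K\in\mathbb{R}^{r\times r}$, score $s_k(i,j)=\mathbf{a}_i^T\mathbf{R}_k\mathbf{a}_j$. TransE of size $r$: parameters $\mathbf{A}\in\mathbb{R}^{N\times r}$ (rows $\mathbf{a}_i$),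 $\mathbf{R}\in\mathbb{R}^{K\times r}$ (rows $\mathbf{r}_k$), score $s_k(i,j)=-\|\mathbf{a}_i+\mathbf{r}_k-\mathbf{a}_j\|_2^2$. For a model type $t$, $\mathcal{M}^t_r$ denotes the set of scoring tensors of all models of type $t$ and size $r$, and $\mathcal{M}^t=\bigcup_{r\in\mathbb{N}^+}\mathcal{M}^t_r$. A class $M^{t_2}$ subsumes $M^{t_1}$ if $\pi(\mathcal{M}^{t_1})\subseteq\pi(\mathcal{M}^{t_2})$ (and analogously for classes of fixed size). *)

theory Defs
  imports "HOL-Analysis.Analysis"
begin

text \<open>A scoring tensor is a function S i j k (subject i, object j, relation k), set to 0 outside
  the index range so that tensors are determined by their entries.\<close>

type_synonym tensor = "nat \<Rightarrow> nat \<Rightarrow> nat \<Rightarrow> real"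
type_synonym rank_tensor = "nat \<Rightarrow> nat \<Rightarrow> nat \<Rightarrow> nat"

definition restrict_tensor :: "nat \<Rightarrow> nat \<Rightarrow> tensor \<Rightarrow> tensor" where
  "restrict_tensor N K f = (\<lambda>i j k. if i < N \<and> j < N \<and> k < K then f i j k else 0)"

definition rescal_score :: "nat \<Rightarrow> (nat \<Rightarrow> nat \<Rightarrow> real) \<Rightarrow> (nat \<Rightarrow> nat \<Rightarrow> nat \<Rightarrow> real)
    \<Rightarrow> nat \<Rightarrow> nat \<Rightarrow> nat \<Rightarrow> real" where
  "rescal_score r A R i j k = (\<Sum>p<r. \<Sum>q<r. A i p * R k p q * A j q)"

definition rescal_class :: "nat \<Rightarrow> nat \<Rightarrow> nat \<Rightarrow> tensor set" where
  "rescal_class N K r = {restrict_tensor N K (rescal_score r A R) | A R. True}"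

definition transe_score :: "nat \<Rightarrow> (nat \<Rightarrow> nat \<Rightarrow> real) \<Rightarrow> (nat \<Rightarrow> nat \<Rightarrow> real)
    \<Rightarrow> nat \<Rightarrow> nat \<Rightarrow> nat \<Rightarrow> real" where
  "transe_score r A R i j k = - (\<Sum>p<r. (A i p + R k p - A j p)\<^sup>2)"

definition transe_class :: "nat \<Rightarrow> nat \<Rightarrow> nat \<Rightarrow> tensor set" where
  "transe_class N K r = {restrict_tensor N K (transe_score r A R) | A R. True}"

definition dense_rank :: "nat \<Rightarrow> nat \<Rightarrow> tensor \<Rightarrow> rank_tensor" where
  "dense_rank N K S = (\<lambda>i j k. if i < N \<and> j < N \<and> k < K then
       1 + card {v. (\<exists>i'<N. \<exists>j'<N. v = S i' j' k) \<and> v > S i j k} else 0)"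

definition rank_set :: "nat \<Rightarrow> nat \<Rightarrow> tensor set \<Rightarrow> rank_tensor set" where
  "rank_set N K X = dense_rank N K ` X"

end

theory Submission
  imports Defs
begin

text \<open>Expanding the square, the TransE score is
  \<open>-\<parallel>a\<^sub>i\<parallel>\<^sup>2 - \<parallel>a\<^sub>j\<parallel>\<^sup>2 - \<parallel>r\<^sub>k\<parallel>\<^sup>2 + 2 a\<^sub>i\<cdot>a\<^sub>j - 2 a\<^sub>i\<cdot>r\<^sub>k + 2 r\<^sub>k\<cdot>a\<^sub>j\<close>, a bilinear form in the
  lifted embeddings \<open>(a\<^sub>i, 1, \<parallel>a\<^sub>i\<parallel>\<^sup>2)\<close> and \<open>(a\<^sub>j, 1, \<parallel>a\<^sub>j\<parallel>\<^sup>2)\<close> whose matrix depends only on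
  \<open>r\<^sub>k\<close>. So TransE of size r has the same scoring tensors as some RESCAL model of size r + 2,
  and padding by zero coordinates embeds RESCAL of size r + 2 into size 2r + 1 once r \<ge> 1.\<close>

definition pad_embedding :: "nat \<Rightarrow> (nat \<Rightarrow> nat \<Rightarrow> real) \<Rightarrow> nat \<Rightarrow> nat \<Rightarrow> real" where
  "pad_embedding m A i p = (if p < m then A i p else 0)"

lemma rescal_score_pad_embedding:
  assumes "m \<le> n"
  shows "rescal_score n (pad_embedding m A) R = rescal_score m A R"
proof (intro ext)
  fix i j k
  have pad: "(\<Sum>p<n. f p) = (\<Sum>p<m. f p)" if "\<And>p. m \<le> p \<Longrightarrow> f p = 0" for f :: "nat \<Rightarrow> real"
    using assms that by (intro sum.mono_neutral_right) auto
  have "rescal_score n (pad_embedding m A) R i j k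
      = (\<Sum>p<m. \<Sum>q<m. pad_embedding m A i p * R k p q * pad_embedding m A j q)"
    unfolding rescal_score_def
    by (subst pad, simp add: pad_embedding_def) (intro sum.cong refl pad, simp add: pad_embedding_def)
  also have "\<dots> = rescal_score m A R i j k"
    by (simp add: rescal_score_def pad_embedding_def)
  finally show "rescal_score n (pad_embedding m A) R i j k = rescal_score m A R i j k" .
qed

lemma rescal_class_mono:
  assumes "m \<le> n"
  shows "rescal_class N K m \<subseteq> rescal_class N K n"
proof
  fix S assume "S \<in> rescal_class N K m"
  then obtain A R where "S = restrict_tensor N K (rescal_score m A R)"
    unfolding rescal_class_def by blast
  then have "S = restrict_tensor N K (rescal_score n (pad_embedding m A) R)"
    by (simp add: rescal_score_pad_embedding[OF assms])
  then show "S \<in> rescal_class N K n"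
    unfolding rescal_class_def by blast
qed

definition transe_lifted_embedding :: "nat \<Rightarrow> (nat \<Rightarrow> nat \<Rightarrow> real) \<Rightarrow> nat \<Rightarrow> nat \<Rightarrow> real" where
  "transe_lifted_embedding r A i p =
     (if p < r then A i p else if p = r then 1 else if p = Suc r then (\<Sum>t<r. (A i t)\<^sup>2) else 0)"

definition transe_relation_matrix ::
    "nat \<Rightarrow> (nat \<Rightarrow> nat \<Rightarrow> real) \<Rightarrow> nat \<Rightarrow> nat \<Rightarrow> nat \<Rightarrow> real" where
  "transe_relation_matrix r R k p q =
     (if p < r \<and> q < r then (if p = q then 2 else 0)
      else if p < r \<and> q = r then - 2 * R k p
      else if p = r \<and> q < r then 2 * R k q
      else if p = r \<and> q = r then - (\<Sum>t<r. (R k t)\<^sup>2)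
      else if p = Suc r \<and> q = r then -1
      else if p = r \<and> q = Suc r then -1
      else 0)"

lemma transe_score_eq_rescal_score:
  "transe_score r A R =
     rescal_score (r + 2) (transe_lifted_embedding r A) (transe_relation_matrix r R)"
proof (intro ext)
  fix i j k
  let ?a = "transe_lifted_embedding r A" and ?M = "transe_relation_matrix r R"
  let ?f = "\<lambda>p q. ?a i p * ?M k p q * ?a j q"
  have rows: "(\<Sum>q<r + 2. ?f p q) = (\<Sum>q<r. ?f p q) + ?f p r + ?f p (Suc r)" for p
    by (simp add: numeral_2_eq_2)
  have diagonal: "(\<Sum>p<r. \<Sum>q<r. ?f p q) = 2 * (\<Sum>p<r. A i p * A j p)"
  proof -
    have "(\<Sum>p<r. \<Sum>q<r. ?f p q) = (\<Sum>p<r. \<Sum>q<r. if q = p then 2 * A i p * A j p else 0)"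
      by (intro sum.cong refl)
        (auto simp: transe_lifted_embedding_def transe_relation_matrix_def)
    then show ?thesis
      by (simp add: sum_distrib_left mult.assoc)
  qed
  have row_r: "(\<Sum>p<r. ?f p r) = - 2 * (\<Sum>p<r. A i p * R k p)"
    by (simp add: transe_lifted_embedding_def transe_relation_matrix_def sum_distrib_left
        mult.commute mult.left_commute)
  have column_r: "(\<Sum>q<r. ?f r q) = 2 * (\<Sum>q<r. R k q * A j q)"
    by (simp add: transe_lifted_embedding_def transe_relation_matrix_def sum_distrib_left
        mult.commute mult.left_commute)
  have row_Suc_r: "(\<Sum>p<r. ?f p (Suc r)) = 0" and column_Suc_r: "(\<Sum>q<r. ?f (Suc r) q) = 0"
    by (simp_all add: transe_relation_matrix_def)
  have "rescal_score (r + 2) ?a ?M i j k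
      = 2 * (\<Sum>p<r. A i p * A j p) - 2 * (\<Sum>p<r. A i p * R k p) + 2 * (\<Sum>q<r. R k q * A j q)
        - (\<Sum>t<r. (R k t)\<^sup>2) - (\<Sum>t<r. (A i t)\<^sup>2) - (\<Sum>t<r. (A j t)\<^sup>2)"
    unfolding rescal_score_def rows
    by (simp add: numeral_2_eq_2 sum.distrib diagonal row_r column_r row_Suc_r column_Suc_r)
      (simp add: transe_lifted_embedding_def transe_relation_matrix_def algebra_simps power2_eq_square)
  also have "\<dots> = transe_score r A R i j k"
    unfolding transe_score_def
    by (simp add: power2_eq_square algebra_simps sum.distrib sum_subtractf sum_distrib_left)
  finally show "transe_score r A R i j k = rescal_score (r + 2) ?a ?M i j k" ..
qed

lemma transe_class_subset_rescal_class:
  "transe_class N K r \<subseteq> rescal_class N K (r + 2)"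
  unfolding transe_class_def rescal_class_def
  by (auto simp: transe_score_eq_rescal_score)

theorem theorem1:
  fixes N K r :: nat
  assumes "N \<ge> 2" and "K \<ge> 1" and "r \<ge> 1"
  shows "rank_set N K (transe_class N K r) \<subseteq> rank_set N K (rescal_class N K (2 * r + 1))"
proof -
  have "transe_class N K r \<subseteq> rescal_class N K (r + 2)"
    by (rule transe_class_subset_rescal_class)
  also have "\<dots> \<subseteq> rescal_class N K (2 * r + 1)"
    using \<open>r \<ge> 1\<close> by (intro rescal_class_mono) simp
  finally show ?thesis
    unfolding rank_set_def by (rule image_mono)
qed

end
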